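(* Let $S'$ be a HeyVL program, $X,Y$ expectations, and $S=\mathtt{assume}\ X;\ S';\ \mathtt{assert}\ Y$. Consider slices with respect to pre $\infty$ and post $\infty$. (1) If $\mathtt{assume}\ X;\ S'$ is an error-witnessing slice of $S$ w.r.t. $(\infty,\infty)$, then $\not\models\{X\}\,S'\,\{Z\}$ for every expectation $Z$. (2) If $S';\ \mathtt{assert}\ Y$ is a verification-witnessing slice of $S$ w.r.t. $(\infty,\infty)$ that verifies (i.e. $\models\{\infty\}\,S';\mathtt{assert}\ Y\,\{\infty\}$), then $\models\{Z\}\,S'\,\{Y\}$ for every expectation $Z$.
   Context: Expectations are functions from program states to $[0,\infty]$, ordered pointwise by $\preceq$. For HeyVL statements, $\mathrm{vp}$ denotes the verification pre-expectation transformer; it is monotone and satisfies $\mathrm{vp}[S_1;S_2](X)=\mathrm{vp}[S_1](\mathrm{vp}[S_2](X))$, $\mathrm{vp}[\mathtt{assert}\ Y](X)=\min(Y,X)$ pointwise, and $\mathrm{vp}[\mathtt{assume}\ Y](X)$ equals $\infty$ at $\sigma$ where $Y(\sigma)\le X(\sigma)$ and $X(\sigma)$ elsewhere. Write $\sigma\models\{X\}S\{Y\}$ iff $X(\sigma)\le\mathrm{vp}[S](Y)(\sigma)$, and $\models\{X\}S\{Y\}$ iff this holds for all states. A subprogram $P$ of $S$ is an error-witnessing slice w.r.t. $(A,B)$ if $\not\models\{A\}P\{B\}$ and every state $\sigma'$ with $\sigma'\not\models\{A\}P\{B\}$ also has $\sigma'\not\models\{A\}S\{B\}$; it is a verification-witnessing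 slice w.r.t. $(A,B)$ if $\models\{A\}P\{B\}$ implies $\models\{A\}S\{B\}$. *)

theory Defs
  imports "HOL-Library.Extended_Nonnegative_Real"
begin

text \<open>Expectations: functions from states to [0,\<infinity>], ordered pointwise.
 A HeyVL (sub)program is represented semantically by its verification
 pre-expectation transformer vp.\<close>

type_synonym 's expectation = "'s \<Rightarrow> ennreal"
type_synonym 's vptrans = "'s expectation \<Rightarrow> 's expectation"

definition infty :: "'s expectation" where
  "infty = (\<lambda>_. \<infinity>)"

definition vp_seq :: "'s vptrans \<Rightarrow> 's vptrans \<Rightarrow> 's vptrans" where
  "vp_seq S1 S2 = (\<lambda>X. S1 (S2 X))"

definition vp_assert :: "'s expectation \<Rightarrow> 's vptrans" where
  "vp_assert Y = (\<lambda>X \<sigma>. min (Y \<sigma>) (X \<sigma>))"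

definition vp_assume :: "'s expectation \<Rightarrow> 's vptrans" where
  "vp_assume Y = (\<lambda>X \<sigma>. if Y \<sigma> \<le> X \<sigma> then \<infinity> else X \<sigma>)"

definition valid_at :: "'s \<Rightarrow> 's expectation \<Rightarrow> 's vptrans \<Rightarrow> 's expectation \<Rightarrow> bool" where
  "valid_at \<sigma> X S Y \<longleftrightarrow> X \<sigma> \<le> S Y \<sigma>"

definition valid :: "'s expectation \<Rightarrow> 's vptrans \<Rightarrow> 's expectation \<Rightarrow> bool" where
  "valid X S Y \<longleftrightarrow> (\<forall>\<sigma>. valid_at \<sigma> X S Y)"

definition error_witnessing :: "'s vptrans \<Rightarrow> 's vptrans \<Rightarrow> 's expectation \<Rightarrow> 's expectation \<Rightarrow> bool" where
  "error_witnessing P S A B \<longleftrightarrow>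
     \<not> valid A P B \<and> (\<forall>\<sigma>. \<not> valid_at \<sigma> A P B \<longrightarrow> \<not> valid_at \<sigma> A S B)"

definition verification_witnessing :: "'s vptrans \<Rightarrow> 's vptrans \<Rightarrow> 's expectation \<Rightarrow> 's expectation \<Rightarrow> bool" where
  "verification_witnessing P S A B \<longleftrightarrow> (valid A P B \<longrightarrow> valid A S B)"

end

theory Submission
  imports Defs
begin

text \<open>Neither part needs the witnessing property of the slice. For (1), a state where
  \<open>assume X; S'\<close> fails the \<open>(\<infinity>,\<infinity>)\<close> triple is one with \<open>S' \<infinity> < X\<close>, and by monotonicity
  \<open>S' Z \<le> S' \<infinity>\<close> for every \<open>Z\<close>. For (2), \<open>assert Y\<close> with post \<open>\<infinity>\<close> yields \<open>Y\<close>, so the slice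
  verifying means \<open>S' Y = \<infinity>\<close>, which dominates every pre-expectation.\<close>

lemma le_infty: "Z \<le> infty"
  by (simp add: infty_def le_fun_def)

lemma vp_assert_infty: "vp_assert Y infty = Y"
  by (simp add: vp_assert_def infty_def)

lemma valid_at_infty_assume_seq_iff:
  "valid_at \<sigma> infty (vp_seq (vp_assume X) S) W \<longleftrightarrow> X \<sigma> \<le> S W \<sigma>"
  by (auto simp: valid_at_def vp_seq_def vp_assume_def infty_def top_unique)

lemma valid_weaken_pre:
  assumes "valid X S Y" and "Z \<le> X"
  shows "valid Z S Y"
  using assms by (auto simp: valid_def valid_at_def le_fun_def intro: order_trans)

lemma valid_infty_seq_assert_iff:
  "valid infty (vp_seq S (vp_assert Y)) infty \<longleftrightarrow> valid infty S Y"
  by (simp add: valid_def valid_at_def vp_seq_def vp_assert_infty)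

lemma not_valid_of_not_valid_infty_assume:
  assumes "mono S" and "\<not> valid infty (vp_seq (vp_assume X) S) infty"
  shows "\<not> valid X S Z"
proof -
  obtain \<sigma> where "\<not> X \<sigma> \<le> S infty \<sigma>"
    using assms(2) by (auto simp: valid_def valid_at_infty_assume_seq_iff)
  moreover have "S Z \<sigma> \<le> S infty \<sigma>"
    using monoD[OF assms(1) le_infty] by (simp add: le_fun_def)
  ultimately have "\<not> valid_at \<sigma> X S Z"
    by (auto simp: valid_at_def intro: order_trans)
  then show ?thesis
    by (auto simp: valid_def)
qed

theorem theorem4:
  fixes S' :: "'s vptrans" and X Y :: "'s expectation"
  assumes mono_S': "mono S'"
  shows
    "(error_witnessing (vp_seq (vp_assume X) S')
         (vp_seq (vp_assume X) (vp_seq S' (vp_assert Y))) infty infty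
        \<longrightarrow> (\<forall>Z. \<not> valid X S' Z))
     \<and> (verification_witnessing (vp_seq S' (vp_assert Y))
           (vp_seq (vp_assume X) (vp_seq S' (vp_assert Y))) infty infty
         \<and> valid infty (vp_seq S' (vp_assert Y)) infty
        \<longrightarrow> (\<forall>Z. valid Z S' Y))"
proof (intro conjI impI allI)
  fix Z
  assume "error_witnessing (vp_seq (vp_assume X) S')
         (vp_seq (vp_assume X) (vp_seq S' (vp_assert Y))) infty infty"
  then have "\<not> valid infty (vp_seq (vp_assume X) S') infty"
    by (simp add: error_witnessing_def)
  with mono_S' show "\<not> valid X S' Z"
    by (rule not_valid_of_not_valid_infty_assume)
next
  fix Z
  assume "verification_witnessing (vp_seq S' (vp_assert Y))
           (vp_seq (vp_assume X) (vp_seq S' (vp_assert Y))) infty infty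
         \<and> valid infty (vp_seq S' (vp_assert Y)) infty"
  then have "valid infty S' Y"
    by (simp add: valid_infty_seq_assert_iff)
  then show "valid Z S' Y"
    using le_infty by (rule valid_weaken_pre)
qed

end
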